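(* Let $\alpha,\kappa>0$, $\beta\in\mathbb R$ and $\varepsilon,\nu\geqslant0$. The ordinary differential equation $$\ddot\tau=\frac{2\kappa}{\tau}+\frac{\varepsilon^2}{\tau^3}-\nu\frac{\dot\tau}{\tau^2},\qquad\tau(0)=\alpha,\quad\dot\tau(0)=\beta,$$ has a unique solution $\tau\in C^2(0,\infty)$, and it satisfies, as $t\to\infty$, $\tau(t)\sim 2t\sqrt{\kappa\ln t}$ and $\dot\tau(t)\sim2\sqrt{\kappa\ln t}$. *)

theory Defs
  imports "HOL-Analysis.Analysis" "HOL-Library.Landau_Symbols"
begin

definition is_ivp_solution ::
  "real \<Rightarrow> real \<Rightarrow> real \<Rightarrow> real \<Rightarrow> real \<Rightarrow> (real \<Rightarrow> real) \<Rightarrow> (real \<Rightarrow> real) \<Rightarrow> bool" where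
  "is_ivp_solution \<alpha> \<beta> \<kappa> \<epsilon> \<nu> \<tau> \<tau>' \<longleftrightarrow>
     \<tau> 0 = \<alpha> \<and> \<tau>' 0 = \<beta> \<and>
     (\<forall>t\<ge>0. \<tau> t \<noteq> 0) \<and>
     (\<forall>t\<ge>0. (\<tau> has_real_derivative \<tau>' t) (at t within {0..})) \<and>
     (\<forall>t\<ge>0. (\<tau>' has_real_derivative
         (2 * \<kappa> / \<tau> t + \<epsilon>^2 / (\<tau> t)^3 - \<nu> * \<tau>' t / (\<tau> t)^2)) (at t within {0..}))"

end

theory Submission
  imports Defs "HOL-Real_Asymp.Real_Asymp"
begin

text \<open>
  With \<open>v = \<tau>' - \<nu> / \<tau>\<close> the equation becomes the first-order system
  \<open>\<tau>' = v + \<nu> / \<tau>\<close>, \<open>v' = 2 \<kappa> / \<tau> + \<epsilon>\<^sup>2 / \<tau>\<^sup>3\<close>. Replacing \<open>1 / \<tau>\<close> by \<open>1 / max \<tau> m\<close> makes it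
  globally Lipschitz, so Picard iteration gives a unique global solution of the truncated system.
  Along any solution the energy \<open>E = \<tau>'\<^sup>2 / 2 - 2 \<kappa> ln \<tau> + \<epsilon>\<^sup>2 / (2 \<tau>\<^sup>2)\<close> satisfies
  \<open>E' = - \<nu> \<tau>'\<^sup>2 / \<tau>\<^sup>2 \<le> 0\<close>, which keeps \<open>\<tau>\<close> above \<open>exp (- E(0) / (2 \<kappa>))\<close>; for \<open>m\<close> below this
  bound the truncation is never active, and solutions of the two problems correspond.

  For the asymptotics, \<open>v\<close> is increasing and eventually positive, so \<open>\<tau>\<close> grows at least
  linearly, and a corrected energy shows that \<open>E\<close> stays bounded, i.e.
  \<open>\<tau>'\<^sup>2 = 4 \<kappa> ln \<tau> + O(1)\<close>. Then \<open>\<tau> / (2 \<surd>(\<kappa> ln \<tau>))\<close> has derivative tending to \<open>1\<close>, so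
  \<open>\<tau> \<sim> 2 t \<surd>(\<kappa> ln \<tau>)\<close> by l'Hopital's rule, whence \<open>ln \<tau> \<sim> ln t\<close>.
\<close>

lemma power_has_integral_0:
  fixes t :: real
  assumes "t \<ge> 0"
  shows "((\<lambda>s. s ^ n) has_integral t ^ Suc n / Suc n) {0..t}"
proof -
  have "((\<lambda>s. s ^ n) has_integral t ^ Suc n / Suc n - 0 ^ Suc n / Suc n) {0..t}"
  proof (rule fundamental_theorem_of_calculus[OF assms])
    fix x :: real
    have "((\<lambda>s. s ^ Suc n / Suc n) has_real_derivative x ^ n) (at x within {0..t})"
      using DERIV_cdivide[OF has_field_derivative_at_within[OF DERIV_pow[of "Suc n" x]], of "Suc n"]
      by simp
    then show "((\<lambda>s. s ^ Suc n / Suc n) has_vector_derivative x ^ n) (at x within {0..t})"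
      by (simp add: has_real_derivative_iff_has_vector_derivative)
  qed
  then show ?thesis by simp
qed

lemma iterated_integral_inequality:
  fixes d :: "nat \<Rightarrow> real \<Rightarrow> real"
  assumes "L \<ge> 0"
    and cont: "\<And>n. continuous_on {0..T} (d n)"
    and base: "\<And>t. t \<in> {0..T} \<Longrightarrow> d 0 t \<le> D"
    and step: "\<And>n t. t \<in> {0..T} \<Longrightarrow> d (Suc n) t \<le> L * integral {0..t} (d n)"
    and "t \<in> {0..T}"
  shows "d n t \<le> D * (L * t) ^ n / fact n"
  using \<open>t \<in> {0..T}\<close>
proof (induction n arbitrary: t)
  case 0
  then show ?case using base by simp
next
  case (Suc n)
  have t: "0 \<le> t" "t \<le> T" using Suc.prems by auto
  define c where "c = D * L ^ n / fact n"
  have poly: "((\<lambda>s. c * s ^ n) has_integral c * (t ^ Suc n / Suc n)) {0..t}"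
    by (intro has_integral_mult_right power_has_integral_0 t)
  have "integral {0..t} (d n) \<le> integral {0..t} (\<lambda>s. c * s ^ n)"
  proof (rule integral_le)
    show "d n integrable_on {0..t}"
      by (rule integrable_continuous_real, rule continuous_on_subset[OF cont]) (use t in auto)
    show "(\<lambda>s. c * s ^ n) integrable_on {0..t}" using poly by blast
    show "d n s \<le> c * s ^ n" if "s \<in> {0..t}" for s
      using Suc.IH[of s] that t by (simp add: c_def power_mult_distrib)
  qed
  also have "\<dots> = c * (t ^ Suc n / Suc n)" using poly by (rule integral_unique)
  finally have "L * integral {0..t} (d n) \<le> L * (c * (t ^ Suc n / Suc n))"
    using \<open>L \<ge> 0\<close> by (rule mult_left_mono)
  also have "\<dots> = D * (L * t) ^ Suc n / fact (Suc n)"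
    by (simp add: c_def field_simps power_mult_distrib)
  finally show ?case using step[OF Suc.prems, of n] by linarith
qed

lemma integral_inequality_imp_nonpos:
  fixes d :: "real \<Rightarrow> real"
  assumes "L \<ge> 0" "continuous_on {0..T} d"
    and "\<And>t. t \<in> {0..T} \<Longrightarrow> d t \<le> L * integral {0..t} d"
    and "t \<in> {0..T}"
  shows "d t \<le> 0"
proof -
  obtain D where D: "\<And>s. s \<in> {0..T} \<Longrightarrow> d s \<le> D"
    using compact_attains_sup[of "d ` {0..T}"] compact_continuous_image[OF assms(2)] assms(4)
    by (metis compact_Icc empty_iff image_eqI imageE)
  have "d t \<le> D * (L * t) ^ n / fact n" for n
    by (rule iterated_integral_inequality[where d = "\<lambda>_. d"]) (use assms D in auto)
  moreover have "(\<lambda>n. D * (L * t) ^ n / fact n) \<longlonglongrightarrow> 0"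
    using summable_LIMSEQ_zero[OF summable_mult[OF summable_exp[of "L * t"], of D]]
    by (simp add: divide_inverse mult_ac)
  ultimately show ?thesis
    by (intro tendsto_le[OF trivial_limit_sequentially _ tendsto_const]) auto
qed

lemma integral_has_vector_derivative_0:
  fixes g :: "real \<Rightarrow> 'b::banach"
  assumes "\<And>T. continuous_on {0..T} g" "t \<ge> 0"
  shows "((\<lambda>s. integral {0..s} g) has_vector_derivative g t) (at t within {0..})"
proof -
  have "((\<lambda>s. integral {0..s} g) has_vector_derivative g t) (at t within {0..t+1})"
    using integral_has_vector_derivative[OF assms(1)] assms(2) by simp
  moreover have "at t within {0..t+1} = at t within {0..}"
    by (rule at_within_nhd[of t "{..<t+1}"]) auto
  ultimately show ?thesis by simp
qed

lemma has_vector_derivative_fst: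
  "(p has_vector_derivative (a, b)) F \<Longrightarrow> ((\<lambda>t. fst (p t)) has_real_derivative a) F"
  by (auto simp: has_real_derivative_iff_has_vector_derivative has_vector_derivative_def
      dest: has_derivative_fst)

lemma has_vector_derivative_snd:
  "(p has_vector_derivative (a, b)) F \<Longrightarrow> ((\<lambda>t. snd (p t)) has_real_derivative b) F"
  by (auto simp: has_real_derivative_iff_has_vector_derivative has_vector_derivative_def
      dest: has_derivative_snd)

lemma has_real_derivative_at_of_within_atLeast:
  assumes "a < t" "(f has_real_derivative D) (at t within {a..})"
  shows "(f has_real_derivative D) (at t)"
proof -
  have "at t within {a..} = at t"
    by (rule at_within_interior) (use assms(1) in simp)
  then show ?thesis using assms(2) by simp
qed

lemma DERIV_nonneg_imp_le:
  fixes f :: "real \<Rightarrow> real"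
  assumes "a \<le> b"
    and deriv: "\<And>x. a \<le> x \<Longrightarrow> x \<le> b \<Longrightarrow> (f has_real_derivative f' x) (at x within {a..})"
    and nonneg: "\<And>x. a < x \<Longrightarrow> x < b \<Longrightarrow> 0 \<le> f' x"
  shows "f a \<le> f b"
proof (rule DERIV_nonneg_imp_increasing_open[OF \<open>a \<le> b\<close>])
  show "continuous_on {a..b} f"
    by (rule DERIV_continuous_on[of _ _ f'], rule has_field_derivative_subset[OF deriv]) auto
  fix x assume x: "a < x" "x < b"
  then have "(f has_real_derivative f' x) (at x)"
    using deriv[of x] by (intro has_real_derivative_at_of_within_atLeast[of a]) auto
  then show "\<exists>y. (f has_real_derivative y) (at x) \<and> 0 \<le> y"
    using nonneg x by blast
qed

lemma first_hitting_time:
  fixes x :: "real \<Rightarrow> real"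
  assumes "continuous_on {0..t} x" "m < x 0" "x t \<le> m" "0 \<le> t"
  obtains s where "0 \<le> s" "s \<le> t" "x s = m" "\<And>r. 0 \<le> r \<Longrightarrow> r < s \<Longrightarrow> m < x r"
proof -
  define S where "S = {0..t} \<inter> x -` {..m}"
  have "closed S"
    unfolding S_def using assms(1) by (rule continuous_closed_preimage) auto
  moreover have "t \<in> S" "bdd_below S"
    using assms by (auto simp: S_def)
  ultimately have "Inf S \<in> S"
    by (intro closed_contains_Inf) auto
  have below: "m < x r" if "0 \<le> r" "r < Inf S" for r
  proof (rule ccontr)
    assume "\<not> m < x r"
    then have "r \<in> S" using that \<open>Inf S \<in> S\<close> by (auto simp: S_def)
    then show False using that cInf_lower[OF _ \<open>bdd_below S\<close>] by fastforce
  qed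
  obtain r where r: "0 \<le> r" "r \<le> Inf S" "x r = m"
    using IVT2'[of x "Inf S" m 0] \<open>Inf S \<in> S\<close> assms continuous_on_subset[OF assms(1)]
    by (auto simp: S_def)
  then have "x (Inf S) = m" using below[of r] by fastforce
  with below \<open>Inf S \<in> S\<close> show ?thesis by (intro that) (auto simp: S_def)
qed

lemma abs_cube_diff_le:
  fixes p q M :: real
  assumes "0 \<le> p" "p \<le> M" "0 \<le> q" "q \<le> M"
  shows "\<bar>p ^ 3 - q ^ 3\<bar> \<le> 3 * M\<^sup>2 * \<bar>p - q\<bar>"
proof -
  have "p ^ 3 - q ^ 3 = (p - q) * (p\<^sup>2 + p * q + q\<^sup>2)"
    by (simp add: algebra_simps power2_eq_square power3_eq_cube)
  then have "\<bar>p ^ 3 - q ^ 3\<bar> = \<bar>p - q\<bar> * (p\<^sup>2 + p * q + q\<^sup>2)"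
    using assms by (simp add: abs_mult)
  also have "\<dots> \<le> \<bar>p - q\<bar> * (3 * M\<^sup>2)"
  proof (rule mult_left_mono)
    have "p\<^sup>2 \<le> M\<^sup>2" "q\<^sup>2 \<le> M\<^sup>2" "p * q \<le> M * M"
      using assms by (auto intro!: power_mono mult_mono)
    then show "p\<^sup>2 + p * q + q\<^sup>2 \<le> 3 * M\<^sup>2" by (simp add: power2_eq_square)
  qed simp
  finally show ?thesis by (simp add: mult_ac)
qed

lemma asymp_equiv_sqrt:
  fixes f g :: "'a \<Rightarrow> real"
  assumes "f \<sim>[F] g" "eventually (\<lambda>x. f x \<ge> 0) F" "eventually (\<lambda>x. g x \<ge> 0) F"
  shows "(\<lambda>x. sqrt (f x)) \<sim>[F] (\<lambda>x. sqrt (g x))"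
proof -
  have "(\<lambda>x. f x powr (1/2)) \<sim>[F] (\<lambda>x. g x powr (1/2))"
    by (rule asymp_equiv_powr_real[OF assms])
  moreover have "eventually (\<lambda>x. f x powr (1/2) = sqrt (f x)) F"
    using assms(2) by eventually_elim (simp add: powr_half_sqrt)
  moreover have "eventually (\<lambda>x. g x powr (1/2) = sqrt (g x)) F"
    using assms(3) by eventually_elim (simp add: powr_half_sqrt)
  ultimately show ?thesis by (simp add: asymp_equiv_cong)
qed

section \<open>Picard iteration\<close>

definition picard_step :: "('a::banach \<Rightarrow> 'a) \<Rightarrow> 'a \<Rightarrow> (real \<Rightarrow> 'a) \<Rightarrow> real \<Rightarrow> 'a" where
  "picard_step f x0 x t = x0 + integral {0..t} (\<lambda>s. f (x s))"

definition picard_iterate :: "('a::banach \<Rightarrow> 'a) \<Rightarrow> 'a \<Rightarrow> nat \<Rightarrow> real \<Rightarrow> 'a" where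
  "picard_iterate f x0 n = (picard_step f x0 ^^ n) (\<lambda>_. x0)"

lemma picard_iterate_0 [simp]: "picard_iterate f x0 0 = (\<lambda>_. x0)"
  by (simp add: picard_iterate_def)

lemma picard_iterate_Suc: "picard_iterate f x0 (Suc n) = picard_step f x0 (picard_iterate f x0 n)"
  by (simp add: picard_iterate_def)

locale lipschitz_ode =
  fixes f :: "'a::banach \<Rightarrow> 'a" and L :: real
  assumes lipschitz: "L-lipschitz_on UNIV f"
begin

lemma L_nonneg: "L \<ge> 0"
  using lipschitz by (rule lipschitz_on_nonneg)

lemma continuous_on_rhs: "continuous_on S x \<Longrightarrow> continuous_on S (\<lambda>s. f (x s))"
  using continuous_on_compose2[OF lipschitz_on_continuous_on[OF lipschitz]] by blast

lemma integrable_rhs: "continuous_on {0..t::real} x \<Longrightarrow> (\<lambda>s. f (x s)) integrable_on {0..t}"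
  by (rule integrable_continuous_real) (rule continuous_on_rhs)

lemma continuous_on_picard_step:
  "continuous_on {0..T} x \<Longrightarrow> continuous_on {0..T} (picard_step f x0 x)"
  unfolding picard_step_def[abs_def]
  by (intro continuous_intros indefinite_integral_continuous_1 integrable_rhs)

lemma continuous_on_picard_iterate: "continuous_on {0..T} (picard_iterate f x0 n)"
  by (induction n) (auto simp: picard_iterate_Suc intro: continuous_on_picard_step)

lemma norm_picard_step_diff:
  assumes "continuous_on {0..t} x" "continuous_on {0..t} y"
  shows "norm (picard_step f x0 x t - picard_step f x0 y t)
           \<le> L * integral {0..t} (\<lambda>s. norm (x s - y s))"
proof -
  have "norm (picard_step f x0 x t - picard_step f x0 y t)
          = norm (integral {0..t} (\<lambda>s. f (x s) - f (y s)))"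
    using assms by (simp add: picard_step_def integral_diff integrable_rhs)
  also have "\<dots> \<le> integral {0..t} (\<lambda>s. L * norm (x s - y s))"
    using assms lipschitz_on_normD[OF lipschitz]
    by (intro integral_norm_bound_integral integrable_diff integrable_rhs integrable_continuous_real)
       (auto intro!: continuous_intros)
  finally show ?thesis by simp
qed

lemma picard_iterate_diff_bound:
  assumes "T \<ge> 0"
  obtains D where "\<And>n t. t \<in> {0..T} \<Longrightarrow>
    norm (picard_iterate f x0 (Suc n) t - picard_iterate f x0 n t) \<le> D * (L * T) ^ n / fact n"
proof -
  define d where "d n t = norm (picard_iterate f x0 (Suc n) t - picard_iterate f x0 n t)" for n t
  have cont: "continuous_on {0..T} (d n)" for n
    unfolding d_def by (intro continuous_intros continuous_on_picard_iterate)
  obtain D where D: "\<And>t. t \<in> {0..T} \<Longrightarrow> d 0 t \<le> D"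
    using compact_attains_sup[OF compact_continuous_image[OF cont[of 0]]] assms
    by (metis atLeastAtMost_iff compact_Icc image_eqI image_is_empty order_refl ex_in_conv imageE)
  have "D \<ge> 0"
    using order_trans[OF norm_ge_zero D[of 0, unfolded d_def]] assms by simp
  have "d n t \<le> D * (L * T) ^ n / fact n" if t: "t \<in> {0..T}" for n t
  proof -
    have "d n t \<le> D * (L * t) ^ n / fact n"
    proof (rule iterated_integral_inequality[where d = d, OF L_nonneg cont D])
      show "t \<in> {0..T}" by (fact t)
      show "d (Suc n) s \<le> L * integral {0..s} (d n)" if "s \<in> {0..T}" for n s
        unfolding d_def picard_iterate_Suc[of _ _ "Suc n"] picard_iterate_Suc[of _ _ n]
        by (rule norm_picard_step_diff) (auto intro: continuous_on_picard_step continuous_on_picard_iterate)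
    qed
    also have "\<dots> \<le> D * (L * T) ^ n / fact n"
      using t \<open>D \<ge> 0\<close> L_nonneg
      by (intro divide_right_mono mult_left_mono power_mono mult_left_mono) auto
    finally show ?thesis .
  qed
  then show ?thesis using that unfolding d_def by blast
qed

definition picard_limit :: "'a \<Rightarrow> real \<Rightarrow> 'a" where
  "picard_limit x0 t = x0 + (\<Sum>k. picard_iterate f x0 (Suc k) t - picard_iterate f x0 k t)"

lemma uniform_limit_picard_iterate:
  "uniform_limit {0..T} (picard_iterate f x0) (picard_limit x0) sequentially"
proof (cases "T \<ge> 0")
  case True
  obtain D where D: "\<And>n t. t \<in> {0..T} \<Longrightarrow>
      norm (picard_iterate f x0 (Suc n) t - picard_iterate f x0 n t) \<le> D * (L * T) ^ n / fact n"
    using picard_iterate_diff_bound[OF True] by blast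
  have "summable (\<lambda>n. D * (L * T) ^ n / fact n)"
    using summable_mult[OF summable_exp[of "L * T"], of D] by (simp add: divide_inverse mult_ac)
  from uniform_limit_add[OF uniform_limit_const Weierstrass_m_test[OF D this]]
  have "uniform_limit {0..T} (\<lambda>n t. x0 + (\<Sum>k<n. picard_iterate f x0 (Suc k) t - picard_iterate f x0 k t))
          (picard_limit x0) sequentially"
    unfolding picard_limit_def[abs_def] .
  then show ?thesis
    by (rule iffD1[OF uniform_limit_cong', rotated 2])
       (auto simp: sum_lessThan_telescope[of "\<lambda>k. picard_iterate f x0 k t" for t])
qed simp

lemma picard_limit_fixpoint:
  assumes "t \<ge> 0"
  shows "picard_limit x0 t = picard_step f x0 (picard_limit x0) t"
proof -
  have "uniform_limit {0..t} (\<lambda>n s. f (picard_iterate f x0 n s)) (\<lambda>s. f (picard_limit x0 s)) sequentially"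
    by (rule uniform_limit_compose_uniformly_continuous_on[where B = UNIV, OF uniform_limit_picard_iterate])
       (auto intro: lipschitz_on_uniformly_continuous[OF lipschitz])
  then obtain I J where
      I: "\<And>n. ((\<lambda>s. f (picard_iterate f x0 n s)) has_integral I n) {0..t}" and
      J: "((\<lambda>s. f (picard_limit x0 s)) has_integral J) {0..t}" and "I \<longlonglongrightarrow> J"
    by (rule uniform_limit_integral) (auto intro: continuous_on_rhs continuous_on_picard_iterate)
  have "integral {0..t} (\<lambda>s. f (picard_iterate f x0 n s)) = I n" for n
    using I by (rule integral_unique)
  with J \<open>I \<longlonglongrightarrow> J\<close>
  have "(\<lambda>n. picard_iterate f x0 (Suc n) t) \<longlonglongrightarrow> picard_step f x0 (picard_limit x0) t"
    by (auto simp: picard_iterate_Suc picard_step_def integral_unique intro!: tendsto_intros)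
  moreover have "(\<lambda>n. picard_iterate f x0 (Suc n) t) \<longlonglongrightarrow> picard_limit x0 t"
    using LIMSEQ_Suc[OF tendsto_uniform_limitI[OF uniform_limit_picard_iterate]] assms by auto
  ultimately show ?thesis by (rule LIMSEQ_unique[rotated])
qed

lemma continuous_on_picard_limit: "continuous_on {0..T} (picard_limit x0)"
  by (rule uniform_limit_theorem[OF _ uniform_limit_picard_iterate])
     (auto intro!: always_eventually continuous_on_picard_iterate)

lemma ode_solution_exists:
  obtains x where "x 0 = x0"
    "\<And>t. t \<ge> 0 \<Longrightarrow> (x has_vector_derivative f (x t)) (at t within {0..})"
proof
  show "picard_limit x0 0 = x0"
    by (subst picard_limit_fixpoint) (simp_all add: picard_step_def)
  fix t :: real
  assume "t \<ge> 0"
  have "((\<lambda>s. x0 + integral {0..s} (\<lambda>r. f (picard_limit x0 r))) has_vector_derivative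
          f (picard_limit x0 t)) (at t within {0..})"
    by (intro has_vector_derivative_add[OF has_vector_derivative_const, simplified]
        integral_has_vector_derivative_0 continuous_on_rhs continuous_on_picard_limit \<open>t \<ge> 0\<close>)
  then show "(picard_limit x0 has_vector_derivative f (picard_limit x0 t)) (at t within {0..})"
    by (rule has_vector_derivative_transform[rotated 2])
       (use \<open>t \<ge> 0\<close> picard_limit_fixpoint in \<open>auto simp: picard_step_def\<close>)
qed

lemma ode_solution_eq_integral:
  assumes "\<And>t. t \<ge> 0 \<Longrightarrow> (x has_vector_derivative f (x t)) (at t within {0..})" "t \<ge> 0"
  shows "x t = x 0 + integral {0..t} (\<lambda>s. f (x s))"
proof -
  have "((\<lambda>s. f (x s)) has_integral x t - x 0) {0..t}"
    by (rule fundamental_theorem_of_calculus[OF assms(2)])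
       (auto intro: has_vector_derivative_within_subset[OF assms(1)])
  then show ?thesis by (simp add: integral_unique)
qed

lemma ode_solution_unique:
  assumes x: "\<And>t. t \<ge> 0 \<Longrightarrow> (x has_vector_derivative f (x t)) (at t within {0..})"
    and y: "\<And>t. t \<ge> 0 \<Longrightarrow> (y has_vector_derivative f (y t)) (at t within {0..})"
    and "x 0 = y 0" "t \<ge> 0"
  shows "x t = y t"
proof -
  have "continuous_on {0..t} z"
    if "\<And>s. s \<ge> 0 \<Longrightarrow> (z has_vector_derivative f (z s)) (at s within {0..})" for z
    by (rule continuous_on_vector_derivative, rule has_vector_derivative_within_subset[OF that]; force)
  then have cont: "continuous_on {0..t} x" "continuous_on {0..t} y"
    using x y by blast+
  have eq: "x s = picard_step f (x 0) x s" "y s = picard_step f (x 0) y s" if "s \<ge> 0" for s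
    using ode_solution_eq_integral[OF x that] ode_solution_eq_integral[OF y that] \<open>x 0 = y 0\<close>
    by (simp_all add: picard_step_def)
  have "norm (x s - y s) \<le> L * integral {0..s} (\<lambda>r. norm (x r - y r))" if "s \<in> {0..t}" for s
  proof -
    have "{0..s} \<subseteq> {0..t}" using that by auto
    then have "continuous_on {0..s} x" "continuous_on {0..s} y"
      using cont continuous_on_subset by blast+
    then show ?thesis
      using norm_picard_step_diff[of s x y "x 0"] eq[of s] that by simp
  qed
  moreover have "continuous_on {0..t} (\<lambda>s. norm (x s - y s))"
    using cont by (intro continuous_intros)
  ultimately have "norm (x t - y t) \<le> 0"
    using \<open>t \<ge> 0\<close> by (intro integral_inequality_imp_nonpos[OF L_nonneg]) auto
  then show ?thesis by simp
qed

end

section \<open>The truncated first-order system\<close>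

definition inv_cutoff :: "real \<Rightarrow> real \<Rightarrow> real" where
  "inv_cutoff m z = 1 / max z m"

lemma inv_cutoff_eq: "m \<le> z \<Longrightarrow> inv_cutoff m z = 1 / z"
  by (simp add: inv_cutoff_def)

lemma inv_cutoff_bounds: "m > 0 \<Longrightarrow> 0 < inv_cutoff m z \<and> inv_cutoff m z \<le> 1 / m"
  by (simp add: inv_cutoff_def frac_le)

lemma inv_cutoff_has_real_derivative:
  assumes "0 \<le> m" "m < z"
  shows "(inv_cutoff m has_real_derivative - 1 / z\<^sup>2) (at z)"
proof (rule has_field_derivative_transform_within_open[where S = "{m<..}"])
  show "((\<lambda>x. 1 / x) has_real_derivative - 1 / z\<^sup>2) (at z)"
    using DERIV_inverse[of z UNIV] assms by (simp add: power2_eq_square inverse_eq_divide)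
qed (use assms in \<open>auto simp: inv_cutoff_def divide_inverse\<close>)

lemma lipschitz_inv_cutoff:
  assumes "m > 0"
  shows "(1 / m\<^sup>2)-lipschitz_on UNIV (inv_cutoff m)"
proof (rule lipschitz_onI)
  fix a b :: real
  define x y where "x = max a m" and "y = max b m"
  have "x \<ge> m" "y \<ge> m" "\<bar>y - x\<bar> \<le> \<bar>a - b\<bar>" by (auto simp: x_def y_def)
  have "dist (inv_cutoff m a) (inv_cutoff m b) = \<bar>y - x\<bar> / (x * y)"
    using \<open>x \<ge> m\<close> \<open>y \<ge> m\<close> assms
    by (simp add: inv_cutoff_def x_def[symmetric] y_def[symmetric] dist_real_def field_simps abs_div)
  also have "\<dots> \<le> \<bar>a - b\<bar> / (m * m)"
    using \<open>x \<ge> m\<close> \<open>y \<ge> m\<close> \<open>\<bar>y - x\<bar> \<le> \<bar>a - b\<bar>\<close> assms by (intro frac_le mult_mono) auto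
  finally show "dist (inv_cutoff m a) (inv_cutoff m b) \<le> 1 / m\<^sup>2 * dist a b"
    by (simp add: dist_real_def power2_eq_square)
qed simp

lemma lipschitz_inv_cutoff_cube:
  assumes "m > 0"
  shows "(3 / m ^ 4)-lipschitz_on UNIV (\<lambda>z. inv_cutoff m z ^ 3)"
proof (rule lipschitz_onI)
  fix a b :: real
  have "\<bar>inv_cutoff m a ^ 3 - inv_cutoff m b ^ 3\<bar> \<le> 3 * (1 / m)\<^sup>2 * \<bar>inv_cutoff m a - inv_cutoff m b\<bar>"
    using inv_cutoff_bounds[OF assms] by (intro abs_cube_diff_le) (auto intro: less_imp_le)
  also have "\<dots> \<le> 3 * (1 / m)\<^sup>2 * (1 / m\<^sup>2 * \<bar>a - b\<bar>)"
    using lipschitz_onD[OF lipschitz_inv_cutoff[OF assms], of a b]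
    by (intro mult_left_mono) (auto simp: dist_real_def)
  finally show "dist (inv_cutoff m a ^ 3) (inv_cutoff m b ^ 3) \<le> 3 / m ^ 4 * dist a b"
    by (simp add: dist_real_def power2_eq_square power4_eq_xxxx)
qed simp

text \<open>Where \<open>fst p \<ge> m\<close>, this is the equation written in the variables \<open>(\<tau>, \<tau>' - \<nu> / \<tau>)\<close>:
  the damping term \<open>- \<nu> \<tau>' / \<tau>\<^sup>2\<close> is the derivative of \<open>\<nu> / \<tau>\<close>, so the second variable has a
  derivative free of \<open>\<tau>'\<close>.\<close>
definition truncated_field :: "real \<Rightarrow> real \<Rightarrow> real \<Rightarrow> real \<Rightarrow> real \<times> real \<Rightarrow> real \<times> real" where
  "truncated_field \<kappa> \<epsilon> \<nu> m p =
     (snd p + \<nu> * inv_cutoff m (fst p), 2 * \<kappa> * inv_cutoff m (fst p) + \<epsilon>\<^sup>2 * inv_cutoff m (fst p) ^ 3)"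

lemma lipschitz_truncated_field:
  assumes "m > 0"
  shows "\<exists>L. L-lipschitz_on UNIV (truncated_field \<kappa> \<epsilon> \<nu> m)"
proof -
  have fst: "1-lipschitz_on UNIV (fst :: real \<times> real \<Rightarrow> real)"
    and snd: "1-lipschitz_on UNIV (snd :: real \<times> real \<Rightarrow> real)"
    by (rule lipschitz_onI; simp add: dist_fst_le dist_snd_le)+
  have cutoff: "(1 / m\<^sup>2 * 1)-lipschitz_on UNIV (\<lambda>p :: real \<times> real. inv_cutoff m (fst p))"
    by (rule lipschitz_on_compose2[OF fst], rule lipschitz_on_subset[OF lipschitz_inv_cutoff[OF assms]]) simp
  have cutoff_cube: "(3 / m ^ 4 * 1)-lipschitz_on UNIV (\<lambda>p :: real \<times> real. inv_cutoff m (fst p) ^ 3)"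
    by (rule lipschitz_on_compose2[OF fst], rule lipschitz_on_subset[OF lipschitz_inv_cutoff_cube[OF assms]]) simp
  show ?thesis
    unfolding truncated_field_def[abs_def]
    by (rule exI, rule lipschitz_on_Pair)
       (rule lipschitz_on_add lipschitz_on_cmult_real snd cutoff cutoff_cube)+
qed

section \<open>Energy\<close>

definition energy :: "real \<Rightarrow> real \<Rightarrow> real \<Rightarrow> real \<Rightarrow> real" where
  "energy \<kappa> \<epsilon> x v = v\<^sup>2 / 2 - 2 * \<kappa> * ln x + \<epsilon>\<^sup>2 / (2 * x\<^sup>2)"

lemma energy_has_real_derivative:
  assumes \<tau>': "(\<tau> has_real_derivative u t) (at t)"
    and u': "(u has_real_derivative 2 * \<kappa> / \<tau> t + \<epsilon>^2 / (\<tau> t)^3 - \<nu> * u t / (\<tau> t)^2) (at t)"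
    and pos: "\<tau> t > 0"
  shows "((\<lambda>s. energy \<kappa> \<epsilon> (\<tau> s) (u s)) has_real_derivative - \<nu> * (u t)\<^sup>2 / (\<tau> t)\<^sup>2) (at t)"
  unfolding energy_def
  by (rule derivative_eq_intros \<tau>' u' refl | use pos in \<open>simp add: field_simps power2_eq_square power3_eq_cube\<close>)+

lemma energy_antimono:
  assumes "0 \<le> s" and cont: "continuous_on {0..s} \<tau>" "continuous_on {0..s} u"
    and pos: "\<And>t. t \<in> {0..s} \<Longrightarrow> \<tau> t > 0"
    and \<tau>': "\<And>t. 0 < t \<Longrightarrow> t < s \<Longrightarrow> (\<tau> has_real_derivative u t) (at t)"
    and u': "\<And>t. 0 < t \<Longrightarrow> t < s \<Longrightarrow>
       (u has_real_derivative 2 * \<kappa> / \<tau> t + \<epsilon>^2 / (\<tau> t)^3 - \<nu> * u t / (\<tau> t)^2) (at t)"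
    and "\<nu> \<ge> 0"
  shows "energy \<kappa> \<epsilon> (\<tau> s) (u s) \<le> energy \<kappa> \<epsilon> (\<tau> 0) (u 0)"
proof (rule DERIV_nonpos_imp_decreasing_open[OF \<open>0 \<le> s\<close>])
  fix t assume t: "0 < t" "t < s"
  have "((\<lambda>s. energy \<kappa> \<epsilon> (\<tau> s) (u s)) has_real_derivative - \<nu> * (u t)\<^sup>2 / (\<tau> t)\<^sup>2) (at t)"
    using t by (intro energy_has_real_derivative \<tau>' u' pos) auto
  moreover have "- \<nu> * (u t)\<^sup>2 / (\<tau> t)\<^sup>2 \<le> 0"
    using \<open>\<nu> \<ge> 0\<close> by (intro divide_nonpos_nonneg mult_nonpos_nonneg) auto
  ultimately show "\<exists>y. ((\<lambda>s. energy \<kappa> \<epsilon> (\<tau> s) (u s)) has_real_derivative y) (at t) \<and> y \<le> 0"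
    by blast
next
  show "continuous_on {0..s} (\<lambda>s. energy \<kappa> \<epsilon> (\<tau> s) (u s))"
    unfolding energy_def using pos by (intro continuous_intros cont) (auto dest: pos)
qed

lemma exp_neg_energy_le:
  assumes "\<kappa> > 0" "x > 0"
  shows "exp (- energy \<kappa> \<epsilon> x v / (2 * \<kappa>)) \<le> x"
proof -
  have "- 2 * \<kappa> * ln x \<le> energy \<kappa> \<epsilon> x v"
    unfolding energy_def using assms by auto
  then have "- energy \<kappa> \<epsilon> x v / (2 * \<kappa>) \<le> ln x"
    using assms by (simp add: field_simps)
  then show ?thesis
    using assms by (metis exp_le_cancel_iff exp_ln)
qed

lemma energy_lower_bound:
  assumes "0 \<le> s" "continuous_on {0..s} \<tau>" "continuous_on {0..s} u"
    and pos: "\<And>t. t \<in> {0..s} \<Longrightarrow> \<tau> t > 0"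
    and "\<And>t. 0 < t \<Longrightarrow> t < s \<Longrightarrow> (\<tau> has_real_derivative u t) (at t)"
    and "\<And>t. 0 < t \<Longrightarrow> t < s \<Longrightarrow>
       (u has_real_derivative 2 * \<kappa> / \<tau> t + \<epsilon>^2 / (\<tau> t)^3 - \<nu> * u t / (\<tau> t)^2) (at t)"
    and "\<nu> \<ge> 0" "\<kappa> > 0"
  shows "exp (- energy \<kappa> \<epsilon> (\<tau> 0) (u 0) / (2 * \<kappa>)) \<le> \<tau> s"
proof -
  have "energy \<kappa> \<epsilon> (\<tau> s) (u s) \<le> energy \<kappa> \<epsilon> (\<tau> 0) (u 0)"
    by (rule energy_antimono[where \<nu> = \<nu>]) (use assms in auto)
  then have "exp (- energy \<kappa> \<epsilon> (\<tau> 0) (u 0) / (2 * \<kappa>)) \<le> exp (- energy \<kappa> \<epsilon> (\<tau> s) (u s) / (2 * \<kappa>))"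
    using \<open>\<kappa> > 0\<close> by (simp add: divide_right_mono)
  also have "\<dots> \<le> \<tau> s"
    using pos \<open>0 \<le> s\<close> \<open>\<kappa> > 0\<close> by (intro exp_neg_energy_le) auto
  finally show ?thesis .
qed

section \<open>Existence and uniqueness\<close>

locale truncated_solution =
  fixes \<alpha> \<beta> \<kappa> \<epsilon> \<nu> m :: real and p :: "real \<Rightarrow> real \<times> real"
  assumes \<alpha>_pos: "\<alpha> > 0" and \<kappa>_pos: "\<kappa> > 0" and \<nu>_nonneg: "\<nu> \<ge> 0"
    and m_pos: "0 < m" and m_less: "m < exp (- energy \<kappa> \<epsilon> \<alpha> \<beta> / (2 * \<kappa>))"
    and initial: "p 0 = (\<alpha>, \<beta> - \<nu> / \<alpha>)"
    and ode: "\<And>t. t \<ge> 0 \<Longrightarrow> (p has_vector_derivative truncated_field \<kappa> \<epsilon> \<nu> m (p t)) (at t within {0..})"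
begin

definition tau :: "real \<Rightarrow> real" where
  "tau t = fst (p t)"

definition velocity :: "real \<Rightarrow> real" where
  "velocity t = snd (p t) + \<nu> * inv_cutoff m (tau t)"

lemma tau_0: "tau 0 = \<alpha>" and velocity_0: "velocity 0 = \<beta>"
  using initial m_less exp_neg_energy_le[OF \<kappa>_pos \<alpha>_pos, of \<epsilon> \<beta>] \<alpha>_pos
  by (simp_all add: tau_def velocity_def inv_cutoff_eq)

lemma tau_has_derivative: "t \<ge> 0 \<Longrightarrow> (tau has_real_derivative velocity t) (at t within {0..})"
  using has_vector_derivative_fst[OF ode[unfolded truncated_field_def]]
  by (simp add: tau_def[abs_def] velocity_def)

lemma snd_has_derivative:
  "t \<ge> 0 \<Longrightarrow> ((\<lambda>s. snd (p s)) has_real_derivative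
     2 * \<kappa> * inv_cutoff m (tau t) + \<epsilon>\<^sup>2 * inv_cutoff m (tau t) ^ 3) (at t within {0..})"
  using has_vector_derivative_snd[OF ode[unfolded truncated_field_def]]
  by (simp add: tau_def)

lemma velocity_has_derivative:
  assumes "t \<ge> 0" "m < tau t"
  shows "(velocity has_real_derivative
           2 * \<kappa> / tau t + \<epsilon>^2 / (tau t)^3 - \<nu> * velocity t / (tau t)^2) (at t within {0..})"
proof -
  have "((\<lambda>s. inv_cutoff m (tau s)) has_real_derivative - 1 / (tau t)\<^sup>2 * velocity t) (at t within {0..})"
    by (rule DERIV_chain2[OF inv_cutoff_has_real_derivative tau_has_derivative])
       (use assms m_pos in auto)
  from DERIV_add[OF snd_has_derivative[OF assms(1)] DERIV_cmult[OF this, of \<nu>]]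
  show ?thesis
    using assms m_pos
    by (simp add: velocity_def[abs_def] inv_cutoff_eq field_simps power2_eq_square power3_eq_cube)
qed

lemma continuous_tau: "continuous_on {0..} tau"
  by (rule DERIV_continuous_on[OF tau_has_derivative]) simp

lemma continuous_velocity: "continuous_on {0..} velocity"
proof -
  have "continuous_on {0..} (\<lambda>s. snd (p s))"
    by (rule DERIV_continuous_on[OF snd_has_derivative]) simp
  moreover have "continuous_on {0..} (\<lambda>s. inv_cutoff m (tau s))"
    using lipschitz_on_continuous_on[OF lipschitz_inv_cutoff[OF m_pos]]
    by (rule continuous_on_compose2[OF _ continuous_tau]) simp
  ultimately show ?thesis
    unfolding velocity_def[abs_def] by (intro continuous_on_add continuous_on_mult_left)
qed

text \<open>Before \<open>tau\<close> first reaches \<open>m\<close> the pair \<open>(tau, velocity)\<close> solves the original equation, so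
  the energy bound holds up to that time and contradicts \<open>tau = m\<close> there.\<close>
lemma tau_above_cutoff:
  assumes "t \<ge> 0"
  shows "m < tau t"
proof (rule ccontr)
  assume "\<not> m < tau t"
  moreover have "m < tau 0"
    using tau_0 m_less exp_neg_energy_le[OF \<kappa>_pos \<alpha>_pos, of \<epsilon> \<beta>] by simp
  moreover have "continuous_on {0..t} tau"
    by (rule continuous_on_subset[OF continuous_tau]) auto
  ultimately obtain s where s: "0 \<le> s" "tau s = m"
    and above: "\<And>r. 0 \<le> r \<Longrightarrow> r < s \<Longrightarrow> m < tau r"
    using first_hitting_time[of t tau m] assms by (metis not_less)
  have "exp (- energy \<kappa> \<epsilon> (tau 0) (velocity 0) / (2 * \<kappa>)) \<le> tau s"
  proof (rule energy_lower_bound[OF s(1) _ _ _ _ _ \<nu>_nonneg \<kappa>_pos])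
    show "continuous_on {0..s} tau" "continuous_on {0..s} velocity"
      by (auto intro: continuous_on_subset[OF continuous_tau] continuous_on_subset[OF continuous_velocity])
    show "tau r > 0" if "r \<in> {0..s}" for r
      using above[of r] s m_pos that by (cases "r < s") auto
    fix r assume r: "0 < r" "r < s"
    show "(tau has_real_derivative velocity r) (at r)"
      using r by (intro has_real_derivative_at_of_within_atLeast[of 0] tau_has_derivative) auto
    show "(velocity has_real_derivative 2 * \<kappa> / tau r + \<epsilon>^2 / (tau r)^3 - \<nu> * velocity r / (tau r)^2) (at r)"
      using r above[of r] by (intro has_real_derivative_at_of_within_atLeast[of 0] velocity_has_derivative) auto
  qed
  then show False
    using s m_less by (simp add: tau_0 velocity_0)
qed

lemma is_ivp_solution: "is_ivp_solution \<alpha> \<beta> \<kappa> \<epsilon> \<nu> tau velocity"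
proof -
  have "tau t \<noteq> 0" if "t \<ge> 0" for t
    using tau_above_cutoff[OF that] m_pos by simp
  then show ?thesis
    unfolding is_ivp_solution_def
    using tau_0 velocity_0 tau_has_derivative velocity_has_derivative tau_above_cutoff by simp
qed

end

locale ivp_solution =
  fixes \<alpha> \<beta> \<kappa> \<epsilon> \<nu> :: real and \<tau> \<tau>' :: "real \<Rightarrow> real"
  assumes solution: "is_ivp_solution \<alpha> \<beta> \<kappa> \<epsilon> \<nu> \<tau> \<tau>'"
    and \<alpha>_pos: "\<alpha> > 0" and \<kappa>_pos: "\<kappa> > 0" and \<nu>_nonneg: "\<nu> \<ge> 0"
begin

lemma initial: "\<tau> 0 = \<alpha>" "\<tau>' 0 = \<beta>"
  using solution by (simp_all add: is_ivp_solution_def)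

lemma tau_has_derivative: "t \<ge> 0 \<Longrightarrow> (\<tau> has_real_derivative \<tau>' t) (at t within {0..})"
  using solution by (simp add: is_ivp_solution_def)

lemma tau'_has_derivative:
  "t \<ge> 0 \<Longrightarrow> (\<tau>' has_real_derivative 2 * \<kappa> / \<tau> t + \<epsilon>^2 / (\<tau> t)^3 - \<nu> * \<tau>' t / (\<tau> t)^2)
     (at t within {0..})"
  using solution by (simp add: is_ivp_solution_def)

lemma continuous_tau: "continuous_on {0..} \<tau>"
  by (rule DERIV_continuous_on[OF tau_has_derivative]) simp

lemma continuous_tau': "continuous_on {0..} \<tau>'"
  by (rule DERIV_continuous_on[OF tau'_has_derivative]) simp

lemma tau_has_derivative_at: "t > 0 \<Longrightarrow> (\<tau> has_real_derivative \<tau>' t) (at t)"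
  by (simp add: has_real_derivative_at_of_within_atLeast[of 0] tau_has_derivative)

lemma tau'_has_derivative_at:
  "t > 0 \<Longrightarrow> (\<tau>' has_real_derivative 2 * \<kappa> / \<tau> t + \<epsilon>^2 / (\<tau> t)^3 - \<nu> * \<tau>' t / (\<tau> t)^2) (at t)"
  by (simp add: has_real_derivative_at_of_within_atLeast[of 0] tau'_has_derivative)

lemma tau_pos: "t \<ge> 0 \<Longrightarrow> \<tau> t > 0"
proof (rule ccontr)
  assume "t \<ge> 0" "\<not> \<tau> t > 0"
  then obtain s where "0 \<le> s" "\<tau> s = 0"
    using IVT2'[of \<tau> t 0 0] initial \<alpha>_pos continuous_on_subset[OF continuous_tau, of "{0..t}"] by auto
  then show False using solution by (simp add: is_ivp_solution_def)
qed

lemma tau_lower_bound: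
  assumes "t \<ge> 0"
  shows "exp (- energy \<kappa> \<epsilon> \<alpha> \<beta> / (2 * \<kappa>)) \<le> \<tau> t"
proof -
  have "exp (- energy \<kappa> \<epsilon> (\<tau> 0) (\<tau>' 0) / (2 * \<kappa>)) \<le> \<tau> t"
    by (rule energy_lower_bound[OF assms _ _ _ tau_has_derivative_at tau'_has_derivative_at \<nu>_nonneg \<kappa>_pos])
       (auto intro: continuous_on_subset[OF continuous_tau] continuous_on_subset[OF continuous_tau'] tau_pos)
  then show ?thesis by (simp add: initial)
qed

definition shifted_velocity :: "real \<Rightarrow> real" where
  "shifted_velocity t = \<tau>' t - \<nu> / \<tau> t"

lemma shifted_velocity_has_derivative:
  assumes "t \<ge> 0"
  shows "(shifted_velocity has_real_derivative 2 * \<kappa> / \<tau> t + \<epsilon>^2 / (\<tau> t)^3) (at t within {0..})"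
  unfolding shifted_velocity_def[abs_def]
  using tau_pos[OF assms]
  by (rule_tac derivative_eq_intros tau_has_derivative tau'_has_derivative assms refl
      | simp add: field_simps power2_eq_square power3_eq_cube)+

lemma solves_truncated:
  assumes "0 < m" "m < exp (- energy \<kappa> \<epsilon> \<alpha> \<beta> / (2 * \<kappa>))" "t \<ge> 0"
  shows "((\<lambda>s. (\<tau> s, \<tau>' s - \<nu> / \<tau> s)) has_vector_derivative
           truncated_field \<kappa> \<epsilon> \<nu> m (\<tau> t, \<tau>' t - \<nu> / \<tau> t)) (at t within {0..})"
proof -
  have "m < \<tau> t" using tau_lower_bound[OF assms(3)] assms(2) by simp
  then have cutoff: "inv_cutoff m (\<tau> t) = 1 / \<tau> t" by (simp add: inv_cutoff_eq)
  from tau_has_derivative[OF assms(3)] shifted_velocity_has_derivative[OF assms(3)] show ?thesis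
    unfolding truncated_field_def has_real_derivative_iff_has_vector_derivative shifted_velocity_def[abs_def]
    using tau_pos[OF assms(3)]
    by (auto intro!: has_vector_derivative_Pair simp: cutoff field_simps power3_eq_cube)
qed

end

lemma admissible_truncation:
  obtains m L where "0 < m" "m < exp (- energy \<kappa> \<epsilon> \<alpha> \<beta> / (2 * \<kappa>))"
    "lipschitz_ode (truncated_field \<kappa> \<epsilon> \<nu> m) L"
proof -
  define m where "m = exp (- energy \<kappa> \<epsilon> \<alpha> \<beta> / (2 * \<kappa>)) / 2"
  have m: "0 < m" "m < exp (- energy \<kappa> \<epsilon> \<alpha> \<beta> / (2 * \<kappa>))" by (simp_all add: m_def)
  obtain L where "L-lipschitz_on UNIV (truncated_field \<kappa> \<epsilon> \<nu> m)"
    using lipschitz_truncated_field[OF m(1)] by blast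
  with m show ?thesis
    by (intro that) (auto simp: lipschitz_ode_def)
qed

lemma ivp_solution_unique:
  assumes "ivp_solution \<alpha> \<beta> \<kappa> \<epsilon> \<nu> \<sigma> \<sigma>'" "ivp_solution \<alpha> \<beta> \<kappa> \<epsilon> \<nu> \<tau> \<tau>'" "t \<ge> 0"
  shows "\<sigma> t = \<tau> t \<and> \<sigma>' t = \<tau>' t"
proof -
  interpret \<sigma>: ivp_solution \<alpha> \<beta> \<kappa> \<epsilon> \<nu> \<sigma> \<sigma>' by fact
  interpret \<tau>: ivp_solution \<alpha> \<beta> \<kappa> \<epsilon> \<nu> \<tau> \<tau>' by fact
  obtain m L where m: "0 < m" "m < exp (- energy \<kappa> \<epsilon> \<alpha> \<beta> / (2 * \<kappa>))"
    and "lipschitz_ode (truncated_field \<kappa> \<epsilon> \<nu> m) L"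
    by (rule admissible_truncation)
  then interpret lipschitz_ode "truncated_field \<kappa> \<epsilon> \<nu> m" L by simp
  have "(\<sigma> 0, \<sigma>' 0 - \<nu> / \<sigma> 0) = (\<tau> 0, \<tau>' 0 - \<nu> / \<tau> 0)"
    using \<sigma>.initial \<tau>.initial by simp
  with ode_solution_unique[OF \<sigma>.solves_truncated[OF m] \<tau>.solves_truncated[OF m] _ \<open>t \<ge> 0\<close>]
  have "(\<sigma> t, \<sigma>' t - \<nu> / \<sigma> t) = (\<tau> t, \<tau>' t - \<nu> / \<tau> t)"
    by blast
  then have "\<sigma> t = \<tau> t" "\<sigma>' t - \<nu> / \<tau> t = \<tau>' t - \<nu> / \<tau> t" by auto
  then show ?thesis by linarith
qed

lemma ivp_solution_exists:
  assumes "\<alpha> > 0" "\<kappa> > 0" "\<nu> \<ge> 0"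
  shows "\<exists>\<tau> \<tau>'. is_ivp_solution \<alpha> \<beta> \<kappa> \<epsilon> \<nu> \<tau> \<tau>'"
proof -
  obtain m L where m: "0 < m" "m < exp (- energy \<kappa> \<epsilon> \<alpha> \<beta> / (2 * \<kappa>))"
    and "lipschitz_ode (truncated_field \<kappa> \<epsilon> \<nu> m) L"
    by (rule admissible_truncation)
  then interpret lipschitz_ode "truncated_field \<kappa> \<epsilon> \<nu> m" L by simp
  obtain p where "p 0 = (\<alpha>, \<beta> - \<nu> / \<alpha>)"
    "\<And>t. t \<ge> 0 \<Longrightarrow> (p has_vector_derivative truncated_field \<kappa> \<epsilon> \<nu> m (p t)) (at t within {0..})"
    using ode_solution_exists[of "(\<alpha>, \<beta> - \<nu> / \<alpha>)"] by blast
  then interpret truncated_solution \<alpha> \<beta> \<kappa> \<epsilon> \<nu> m p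
    using assms m by unfold_locales
  show ?thesis using is_ivp_solution by blast
qed

section \<open>Asymptotics\<close>

context ivp_solution
begin

lemma energy_le_initial:
  assumes "t \<ge> 0"
  shows "energy \<kappa> \<epsilon> (\<tau> t) (\<tau>' t) \<le> energy \<kappa> \<epsilon> \<alpha> \<beta>"
  using energy_antimono[OF assms _ _ _ tau_has_derivative_at tau'_has_derivative_at \<nu>_nonneg]
    continuous_on_subset[OF continuous_tau] continuous_on_subset[OF continuous_tau'] tau_pos
  by (auto simp: initial)

lemma velocity_sq_le:
  assumes "t \<ge> 0"
  shows "(\<tau>' t)\<^sup>2 \<le> 2 * energy \<kappa> \<epsilon> \<alpha> \<beta> + 4 * \<kappa> * ln (\<tau> t)"
proof -
  have "0 \<le> \<epsilon>\<^sup>2 / (2 * (\<tau> t)\<^sup>2)" by simp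
  then show ?thesis
    using energy_le_initial[OF assms] unfolding energy_def[of _ _ "\<tau> t"] by linarith
qed

lemma tau_le_linear:
  assumes "\<And>t. t > 0 \<Longrightarrow> \<tau>' t \<le> C" "t \<ge> 0"
  shows "\<tau> t \<le> \<alpha> + C * t"
proof -
  have "(\<lambda>s. \<alpha> + C * s - \<tau> s) 0 \<le> (\<lambda>s. \<alpha> + C * s - \<tau> s) t"
  proof (rule DERIV_nonneg_imp_le[OF \<open>t \<ge> 0\<close>])
    show "((\<lambda>s. \<alpha> + C * s - \<tau> s) has_real_derivative C - \<tau>' x) (at x within {0..})" if "0 \<le> x" for x
      using tau_has_derivative[OF that] by (auto intro!: derivative_eq_intros)
  qed (use assms in auto)
  then show ?thesis by (simp add: initial)
qed

lemma shifted_velocity_ge_log: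
  assumes "C > 0" and linear: "\<And>t. t \<ge> 0 \<Longrightarrow> \<tau> t \<le> \<alpha> + C * t" and "t \<ge> 0"
  shows "shifted_velocity 0 + 2 * \<kappa> / C * (ln (\<alpha> + C * t) - ln \<alpha>) \<le> shifted_velocity t"
proof -
  have pos: "\<alpha> + C * s > 0" if "s \<ge> 0" for s
    using \<alpha>_pos \<open>C > 0\<close> that by (simp add: add_pos_nonneg)
  have "(\<lambda>s. shifted_velocity s - 2 * \<kappa> / C * ln (\<alpha> + C * s)) 0
          \<le> (\<lambda>s. shifted_velocity s - 2 * \<kappa> / C * ln (\<alpha> + C * s)) t"
  proof (rule DERIV_nonneg_imp_le[OF \<open>t \<ge> 0\<close>])
    show "((\<lambda>s. shifted_velocity s - 2 * \<kappa> / C * ln (\<alpha> + C * s)) has_real_derivative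
            2 * \<kappa> / \<tau> s + \<epsilon>^2 / (\<tau> s)^3 - 2 * \<kappa> / C * (C / (\<alpha> + C * s))) (at s within {0..})"
      if "0 \<le> s" for s
      using pos[OF that]
      by (rule_tac derivative_eq_intros shifted_velocity_has_derivative that refl | simp)+
    fix s :: real assume "0 < s"
    then have "2 * \<kappa> / (\<alpha> + C * s) \<le> 2 * \<kappa> / \<tau> s" "0 \<le> \<epsilon>^2 / (\<tau> s)^3"
      using linear[of s] tau_pos[of s] \<kappa>_pos by (auto intro: divide_left_mono)
    then show "0 \<le> 2 * \<kappa> / \<tau> s + \<epsilon>^2 / (\<tau> s)^3 - 2 * \<kappa> / C * (C / (\<alpha> + C * s))"
      using \<open>C > 0\<close> by simp
  qed
  then show ?thesis by (simp add: algebra_simps)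
qed

text \<open>If the shifted velocity stayed nonpositive, \<open>\<tau>'\<close> would be bounded, \<open>\<tau>\<close> would grow at
  most linearly, and then the shifted velocity, whose derivative is at least \<open>2 \<kappa> / \<tau>\<close>, would
  grow logarithmically.\<close>
lemma shifted_velocity_pos: "\<exists>t1 > 0. shifted_velocity t1 > 0"
proof (rule ccontr)
  assume "\<not> ?thesis"
  then have nonpos: "shifted_velocity t \<le> 0" if "t > 0" for t
    using that by (meson not_le)
  define c where "c = exp (- energy \<kappa> \<epsilon> \<alpha> \<beta> / (2 * \<kappa>))"
  define C where "C = \<nu> / c + 1"
  have "C > 0" using \<nu>_nonneg by (simp add: C_def c_def add_nonneg_pos)
  have "\<tau>' t \<le> C" if "t > 0" for t
  proof -
    have "\<nu> / \<tau> t \<le> \<nu> / c"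
      using tau_lower_bound[of t] tau_pos[of t] that \<nu>_nonneg
      by (intro divide_left_mono) (auto simp: c_def)
    then show ?thesis using nonpos[OF that] by (simp add: shifted_velocity_def C_def)
  qed
  then have "\<tau> t \<le> \<alpha> + C * t" if "t \<ge> 0" for t
    using tau_le_linear that by blast
  from shifted_velocity_ge_log[OF \<open>C > 0\<close> this]
  have grows: "eventually (\<lambda>t. shifted_velocity 0 + 2 * \<kappa> / C * (ln (\<alpha> + C * t) - ln \<alpha>) \<le> shifted_velocity t) at_top"
    by (auto simp: eventually_at_top_linorder)
  have "filterlim (\<lambda>t. 2 * \<kappa> / C * (ln (\<alpha> + C * t) - ln \<alpha>)) at_top at_top"
    using \<open>C > 0\<close> \<kappa>_pos \<alpha>_pos by real_asymp
  then have "eventually (\<lambda>t. 1 - shifted_velocity 0 \<le> 2 * \<kappa> / C * (ln (\<alpha> + C * t) - ln \<alpha>)) at_top"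
    by (simp add: filterlim_at_top)
  with grows have "eventually (\<lambda>t. shifted_velocity t > 0) at_top"
    by eventually_elim linarith
  moreover have "eventually (\<lambda>t::real. t > 0) at_top" by simp
  ultimately obtain t where "t > 0" "shifted_velocity t > 0"
    by (metis eventually_at_top_linorder linorder_not_less nle_le)
  with nonpos show False by force
qed

lemma eventually_linear_growth:
  obtains t1 \<delta> where "t1 > 0" "\<delta> > 0" "\<And>t. t \<ge> t1 \<Longrightarrow> \<delta> \<le> \<tau>' t"
    "\<And>t. t \<ge> t1 \<Longrightarrow> \<tau> t1 + \<delta> * (t - t1) \<le> \<tau> t"
proof -
  obtain t1 where "t1 > 0" "shifted_velocity t1 > 0"
    using shifted_velocity_pos by blast
  have "shifted_velocity t1 \<le> \<tau>' t" if "t \<ge> t1" for t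
  proof -
    have "shifted_velocity t1 \<le> shifted_velocity t"
    proof (rule DERIV_nonneg_imp_le[OF that])
      show "(shifted_velocity has_real_derivative 2 * \<kappa> / \<tau> x + \<epsilon>^2 / (\<tau> x)^3) (at x within {t1..})"
        if "t1 \<le> x" for x
        using shifted_velocity_has_derivative[of x] that \<open>t1 > 0\<close>
        by (auto intro: has_field_derivative_subset)
      show "0 \<le> 2 * \<kappa> / \<tau> x + \<epsilon>^2 / (\<tau> x)^3" if "t1 < x" for x
        using tau_pos[of x] that \<open>t1 > 0\<close> \<kappa>_pos by simp
    qed
    moreover have "\<nu> / \<tau> t \<ge> 0" using tau_pos[of t] that \<open>t1 > 0\<close> \<nu>_nonneg by simp
    ultimately show ?thesis by (simp add: shifted_velocity_def)
  qed
  moreover have "\<tau> t1 + shifted_velocity t1 * (t - t1) \<le> \<tau> t" if "t \<ge> t1" for t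
  proof -
    have "(\<lambda>s. \<tau> s - shifted_velocity t1 * s) t1 \<le> (\<lambda>s. \<tau> s - shifted_velocity t1 * s) t"
    proof (rule DERIV_nonneg_imp_le[OF that])
      show "((\<lambda>s. \<tau> s - shifted_velocity t1 * s) has_real_derivative \<tau>' x - shifted_velocity t1) (at x within {t1..})"
        if "t1 \<le> x" for x
        using tau_has_derivative[of x] that \<open>t1 > 0\<close>
        by (auto intro!: derivative_eq_intros intro: has_field_derivative_subset)
    qed (use calculation in auto)
    then show ?thesis by (simp add: algebra_simps)
  qed
  ultimately show ?thesis using that \<open>t1 > 0\<close> \<open>shifted_velocity t1 > 0\<close> by blast
qed

lemma tau_tendsto_at_top: "filterlim \<tau> at_top at_top"
proof -
  obtain t1 \<delta> where "\<delta> > 0" "\<And>t. t \<ge> t1 \<Longrightarrow> \<tau> t1 + \<delta> * (t - t1) \<le> \<tau> t"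
    using eventually_linear_growth by metis
  moreover have "filterlim (\<lambda>t. \<tau> t1 + \<delta> * (t - t1)) at_top at_top"
    using \<open>\<delta> > 0\<close> by real_asymp
  ultimately show ?thesis
    by (elim filterlim_at_top_mono) (auto simp: eventually_at_top_linorder)
qed

lemma velocity_le_log:
  assumes "t \<ge> 0" "\<tau> t \<ge> 1"
  shows "\<tau>' t \<le> 1 + \<bar>2 * energy \<kappa> \<epsilon> \<alpha> \<beta>\<bar> + 4 * \<kappa> * ln (\<tau> t)"
proof -
  have "0 \<le> 4 * \<kappa> * ln (\<tau> t)" using assms(2) \<kappa>_pos by simp
  moreover have "\<tau>' t \<le> (\<tau>' t)\<^sup>2" if "\<tau>' t \<ge> 1"
    using that by (simp add: power2_eq_square)
  ultimately show ?thesis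
    using velocity_sq_le[OF assms(1)] by (cases "\<tau>' t \<le> 1") linarith+
qed

text \<open>With \<open>g x = (C\<^sub>1 + C\<^sub>2 + C\<^sub>2 ln x) / x \<ge> 0\<close> one has \<open>(g \<circ> \<tau>)' = - (C\<^sub>1 + C\<^sub>2 ln \<tau>) \<tau>' / \<tau>\<^sup>2\<close>,
  and since \<open>\<tau>' \<le> C\<^sub>1 + C\<^sub>2 ln \<tau>\<close> this decay dominates the energy loss \<open>\<nu> \<tau>'\<^sup>2 / \<tau>\<^sup>2\<close>; hence
  \<open>energy - \<nu> g(\<tau>)\<close> is eventually nondecreasing.\<close>
lemma energy_eventually_bounded_below:
  obtains B where "eventually (\<lambda>t. B \<le> energy \<kappa> \<epsilon> (\<tau> t) (\<tau>' t)) at_top"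
proof -
  obtain t1 \<delta> where t1: "t1 > 0" "\<delta> > 0" "\<And>t. t \<ge> t1 \<Longrightarrow> \<delta> \<le> \<tau>' t"
    using eventually_linear_growth by metis
  obtain N where N: "\<And>t. t \<ge> N \<Longrightarrow> 1 \<le> \<tau> t"
    using tau_tendsto_at_top by (auto simp: filterlim_at_top eventually_at_top_linorder)
  define t2 where "t2 = max t1 N"
  have t2: "0 < t" "1 \<le> \<tau> t" "0 < \<tau>' t" if "t \<ge> t2" for t
    using that t1 N[of t] by (auto simp: t2_def intro: less_le_trans)
  define C1 C2 where "C1 = 1 + \<bar>2 * energy \<kappa> \<epsilon> \<alpha> \<beta>\<bar>" and "C2 = 4 * \<kappa>"
  define g where "g x = (C1 + C2 + C2 * ln x) / x" for x
  define G where "G t = energy \<kappa> \<epsilon> (\<tau> t) (\<tau>' t) - \<nu> * g (\<tau> t)" for t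
  have G_deriv: "(G has_real_derivative \<nu> * \<tau>' t * (C1 + C2 * ln (\<tau> t) - \<tau>' t) / (\<tau> t)\<^sup>2) (at t)"
    if "t \<ge> t2" for t
  proof -
    have g: "(g has_real_derivative - (C1 + C2 * ln x) / x\<^sup>2) (at x)" if "x > 0" for x
      unfolding g_def[abs_def] using that
      by (rule_tac derivative_eq_intros refl | simp add: field_simps power2_eq_square)+
    from DERIV_diff[OF energy_has_real_derivative[OF tau_has_derivative_at tau'_has_derivative_at]
        DERIV_cmult[OF DERIV_chain2[OF g tau_has_derivative_at]], of t \<nu>]
    show ?thesis
      using t2[OF that] unfolding G_def[abs_def] by (simp add: field_simps power2_eq_square)
  qed
  have "G t2 \<le> G t" if "t \<ge> t2" for t
  proof (rule DERIV_nonneg_imp_le[OF that])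
    show "(G has_real_derivative \<nu> * \<tau>' x * (C1 + C2 * ln (\<tau> x) - \<tau>' x) / (\<tau> x)\<^sup>2) (at x within {t2..})"
      if "t2 \<le> x" for x
      using G_deriv[OF that] by (rule has_field_derivative_at_within)
    show "0 \<le> \<nu> * \<tau>' x * (C1 + C2 * ln (\<tau> x) - \<tau>' x) / (\<tau> x)\<^sup>2" if "t2 < x" for x
      using t2[of x] velocity_le_log[of x] \<nu>_nonneg that by (simp add: C1_def C2_def)
  qed
  moreover have "G t \<le> energy \<kappa> \<epsilon> (\<tau> t) (\<tau>' t)" if "t \<ge> t2" for t
    using t2[OF that] \<nu>_nonneg \<kappa>_pos by (simp add: G_def g_def C1_def C2_def)
  ultimately have "eventually (\<lambda>t. G t2 \<le> energy \<kappa> \<epsilon> (\<tau> t) (\<tau>' t)) at_top"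
    unfolding eventually_at_top_linorder by (meson order_trans)
  then show ?thesis by (rule that)
qed

lemma velocity_sq_minus_log_bounded:
  obtains K where "eventually (\<lambda>t. \<bar>(\<tau>' t)\<^sup>2 - 4 * \<kappa> * ln (\<tau> t)\<bar> \<le> K) at_top"
proof -
  obtain B where "eventually (\<lambda>t. B \<le> energy \<kappa> \<epsilon> (\<tau> t) (\<tau>' t)) at_top"
    by (rule energy_eventually_bounded_below)
  moreover have "eventually (\<lambda>t. 1 \<le> \<tau> t) at_top"
    using tau_tendsto_at_top by (auto simp: filterlim_at_top)
  moreover have "eventually (\<lambda>t::real. 0 \<le> t) at_top"
    by (rule eventually_ge_at_top)
  ultimately have "eventually (\<lambda>t. \<bar>(\<tau>' t)\<^sup>2 - 4 * \<kappa> * ln (\<tau> t)\<bar>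
                      \<le> \<bar>2 * energy \<kappa> \<epsilon> \<alpha> \<beta>\<bar> + \<bar>2 * B\<bar> + \<epsilon>\<^sup>2) at_top"
  proof eventually_elim
    case (elim t)
    have "\<epsilon>\<^sup>2 / (\<tau> t)\<^sup>2 \<le> \<epsilon>\<^sup>2"
      using elim by (simp add: divide_le_eq mult_le_cancel_left1 one_le_power)
    moreover have "0 \<le> \<epsilon>\<^sup>2 / (\<tau> t)\<^sup>2" by simp
    moreover have "(\<tau>' t)\<^sup>2 - 4 * \<kappa> * ln (\<tau> t) = 2 * energy \<kappa> \<epsilon> (\<tau> t) (\<tau>' t) - \<epsilon>\<^sup>2 / (\<tau> t)\<^sup>2"
      by (simp add: energy_def field_simps)
    ultimately show ?case
      using elim energy_le_initial[of t] by linarith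
  qed
  then show ?thesis by (rule that)
qed

lemma ln_tau_tendsto_at_top: "filterlim (\<lambda>t. ln (\<tau> t)) at_top at_top"
  by (rule filterlim_compose[OF ln_at_top tau_tendsto_at_top])

lemma velocity_sq_equiv: "(\<lambda>t. (\<tau>' t)\<^sup>2) \<sim>[at_top] (\<lambda>t. 4 * \<kappa> * ln (\<tau> t))"
proof (rule smallo_imp_asymp_equiv)
  obtain K where "eventually (\<lambda>t. \<bar>(\<tau>' t)\<^sup>2 - 4 * \<kappa> * ln (\<tau> t)\<bar> \<le> K) at_top"
    by (rule velocity_sq_minus_log_bounded)
  then have "(\<lambda>t. (\<tau>' t)\<^sup>2 - 4 * \<kappa> * ln (\<tau> t)) \<in> O(\<lambda>_. 1)"
    by (intro bigoI[of _ K]) auto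
  also have "(\<lambda>_. 1) \<in> o(\<lambda>t. 4 * \<kappa> * ln (\<tau> t))"
  proof (rule smalloI_tendsto)
    have "filterlim (\<lambda>t. 4 * \<kappa> * ln (\<tau> t)) at_top at_top"
      using \<kappa>_pos by (intro filterlim_tendsto_pos_mult_at_top[OF tendsto_const _ ln_tau_tendsto_at_top]) auto
    then show "((\<lambda>t. 1 / (4 * \<kappa> * ln (\<tau> t))) \<longlongrightarrow> 0) at_top"
      by (intro tendsto_divide_0[OF tendsto_const] filterlim_at_top_imp_at_infinity)
    then show "eventually (\<lambda>t. 4 * \<kappa> * ln (\<tau> t) \<noteq> 0) at_top"
      using \<open>filterlim _ at_top at_top\<close> by (auto simp: filterlim_at_top_dense elim!: eventually_mono)
  qed
  finally show "(\<lambda>t. (\<tau>' t)\<^sup>2 - 4 * \<kappa> * ln (\<tau> t)) \<in> o(\<lambda>t. 4 * \<kappa> * ln (\<tau> t))" .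
qed

lemma eventually_tau_gt_1: "eventually (\<lambda>t. 0 < t \<and> 1 < \<tau> t \<and> 0 < \<tau>' t) at_top"
proof -
  obtain t1 \<delta> where "t1 > 0" "\<delta> > 0" "\<And>t. t \<ge> t1 \<Longrightarrow> \<delta> \<le> \<tau>' t"
    using eventually_linear_growth by metis
  then have "eventually (\<lambda>t. 0 < t \<and> 0 < \<tau>' t) at_top"
    unfolding eventually_at_top_linorder by (metis less_le_trans)
  moreover have "eventually (\<lambda>t. 1 < \<tau> t) at_top"
    using tau_tendsto_at_top by (simp add: filterlim_at_top_dense)
  ultimately show ?thesis by eventually_elim auto
qed

lemma velocity_equiv: "\<tau>' \<sim>[at_top] (\<lambda>t. 2 * sqrt (\<kappa> * ln (\<tau> t)))"
proof -
  have nonneg: "eventually (\<lambda>t. 0 \<le> 4 * \<kappa> * ln (\<tau> t)) at_top"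
    using eventually_tau_gt_1 by eventually_elim (use \<kappa>_pos in simp)
  have "(\<lambda>t. sqrt ((\<tau>' t)\<^sup>2)) \<sim>[at_top] (\<lambda>t. sqrt (4 * \<kappa> * ln (\<tau> t)))"
    by (rule asymp_equiv_sqrt[OF velocity_sq_equiv _ nonneg]) simp
  moreover have "eventually (\<lambda>t. sqrt ((\<tau>' t)\<^sup>2) = \<tau>' t) at_top"
    using eventually_tau_gt_1 by eventually_elim simp
  moreover have "eventually (\<lambda>t. sqrt (4 * \<kappa> * ln (\<tau> t)) = 2 * sqrt (\<kappa> * ln (\<tau> t))) at_top"
    by (simp add: real_sqrt_mult)
  ultimately show ?thesis by (simp add: asymp_equiv_cong)
qed

lemma scaled_tau_has_derivative:
  assumes "t > 0" "\<tau> t > 1"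
  shows "((\<lambda>s. \<tau> s / (2 * sqrt (\<kappa> * ln (\<tau> s)))) has_real_derivative
           \<tau>' t / (2 * sqrt (\<kappa> * ln (\<tau> t))) * (1 - 1 / (2 * ln (\<tau> t)))) (at t)"
proof -
  define y r where "y = ln (\<tau> t)" and "r = sqrt (\<kappa> * y)"
  have pos: "y > 0" "r > 0" "\<tau> t > 0" and r_sq: "r * r = \<kappa> * y"
    using assms \<kappa>_pos by (auto simp: y_def r_def)
  have "((\<lambda>s. \<kappa> * ln (\<tau> s)) has_real_derivative \<kappa> * (inverse (\<tau> t) * \<tau>' t)) (at t)"
    by (rule DERIV_cmult[OF DERIV_chain2[OF DERIV_ln tau_has_derivative_at]]) (use pos assms in auto)
  moreover have "0 < \<kappa> * ln (\<tau> t)" using pos \<kappa>_pos by (simp add: y_def)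
  ultimately have "((\<lambda>s. sqrt (\<kappa> * ln (\<tau> s))) has_real_derivative
               inverse r / 2 * (\<kappa> * (inverse (\<tau> t) * \<tau>' t))) (at t)"
    using DERIV_chain2[OF DERIV_real_sqrt] by (simp add: r_def y_def)
  from DERIV_divide[OF tau_has_derivative_at DERIV_cmult[OF this, of 2]]
  have "((\<lambda>s. \<tau> s / (2 * sqrt (\<kappa> * ln (\<tau> s)))) has_real_derivative
          (\<tau>' t * (2 * r) - \<tau> t * (2 * (inverse r / 2 * (\<kappa> * (inverse (\<tau> t) * \<tau>' t)))))
            / (2 * r * (2 * r))) (at t)"
    using pos assms \<kappa>_pos by (simp add: r_def y_def)
  moreover have "(\<tau>' t * (2 * r) - \<tau> t * (2 * (inverse r / 2 * (\<kappa> * (inverse (\<tau> t) * \<tau>' t)))))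
                   / (2 * r * (2 * r)) = \<tau>' t / (2 * r) * (1 - 1 / (2 * y))"
    using pos \<kappa>_pos by (simp add: field_simps r_sq)
  ultimately show ?thesis by (simp add: y_def r_def)
qed

lemma tau_equiv: "\<tau> \<sim>[at_top] (\<lambda>t. 2 * t * sqrt (\<kappa> * ln (\<tau> t)))"
proof (rule asymp_equivI')
  define Q where "Q t = \<tau> t / (2 * sqrt (\<kappa> * ln (\<tau> t)))" for t
  define Q' where "Q' t = \<tau>' t / (2 * sqrt (\<kappa> * ln (\<tau> t))) * (1 - 1 / (2 * ln (\<tau> t)))" for t
  have "eventually (\<lambda>t. \<tau>' t \<noteq> 0 \<or> 2 * sqrt (\<kappa> * ln (\<tau> t)) \<noteq> 0) at_top"
    using eventually_tau_gt_1 by eventually_elim auto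
  then have "((\<lambda>t. \<tau>' t / (2 * sqrt (\<kappa> * ln (\<tau> t)))) \<longlongrightarrow> 1) at_top"
    by (rule asymp_equivD_strong[OF velocity_equiv])
  moreover have "((\<lambda>t. 1 / (2 * ln (\<tau> t))) \<longlongrightarrow> 0) at_top"
    by (intro tendsto_divide_0[OF tendsto_const] filterlim_at_top_imp_at_infinity
        filterlim_tendsto_pos_mult_at_top[OF tendsto_const _ ln_tau_tendsto_at_top]) simp
  ultimately have "(Q' \<longlongrightarrow> 1) at_top"
    unfolding Q'_def[abs_def] using tendsto_mult[OF _ tendsto_diff[OF tendsto_const]] by fastforce
  moreover have "eventually (\<lambda>t. (Q has_real_derivative Q' t) (at t)) at_top"
    using eventually_tau_gt_1
    by eventually_elim (unfold Q_def[abs_def] Q'_def, rule scaled_tau_has_derivative, auto)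
  ultimately have "((\<lambda>t. Q t / t) \<longlongrightarrow> 1) at_top"
    by (intro lhospital_at_top_at_top[where g' = "\<lambda>_. 1", OF filterlim_ident])
       (simp_all add: DERIV_ident)
  moreover have "eventually (\<lambda>t. Q t / t = \<tau> t / (2 * t * sqrt (\<kappa> * ln (\<tau> t)))) at_top"
    using eventually_tau_gt_1 by eventually_elim (simp add: Q_def)
  ultimately show "((\<lambda>t. \<tau> t / (2 * t * sqrt (\<kappa> * ln (\<tau> t)))) \<longlongrightarrow> 1) at_top"
    by (rule Lim_transform_eventually)
qed

text \<open>Taking logarithms in the previous equivalence gives
  \<open>ln \<tau> = ln t + ln (2 \<surd>(\<kappa> ln \<tau>)) + o(1)\<close>, and the middle term is \<open>o(ln \<tau>)\<close>.\<close>
lemma ln_tau_equiv: "(\<lambda>t. ln (\<tau> t)) \<sim>[at_top] ln"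
proof -
  define y where "y t = ln (\<tau> t)" for t
  define e where "e t = \<tau> t / (2 * t * sqrt (\<kappa> * y t))" for t
  have ev: "eventually (\<lambda>t. 0 < t \<and> 1 < \<tau> t \<and> 0 < e t) at_top"
    using eventually_tau_gt_1 by eventually_elim (use \<kappa>_pos in \<open>simp add: e_def y_def\<close>)
  have y_inf: "filterlim y at_infinity at_top"
    unfolding y_def by (rule filterlim_at_top_imp_at_infinity[OF ln_tau_tendsto_at_top])
  have "eventually (\<lambda>t. \<tau> t \<noteq> 0 \<or> 2 * t * sqrt (\<kappa> * ln (\<tau> t)) \<noteq> 0) at_top"
    using eventually_tau_gt_1 by eventually_elim auto
  then have "(e \<longlongrightarrow> 1) at_top"
    unfolding e_def[abs_def] y_def by (rule asymp_equivD_strong[OF tau_equiv])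
  then have "((\<lambda>t. ln (e t)) \<longlongrightarrow> ln 1) at_top"
    by (rule tendsto_ln) simp
  then have ln_e: "((\<lambda>t. ln (e t) / y t) \<longlongrightarrow> 0) at_top"
    using y_inf by (intro tendsto_divide_0) auto
  have ln_r: "((\<lambda>t. ln (2 * sqrt (\<kappa> * y t)) / y t) \<longlongrightarrow> 0) at_top"
  proof -
    have "((\<lambda>z. ln (2 * sqrt (\<kappa> * z)) / z) \<longlongrightarrow> 0) at_top"
      using \<kappa>_pos by real_asymp
    then show ?thesis
      unfolding y_def by (rule filterlim_compose[OF _ ln_tau_tendsto_at_top])
  qed
  have "((\<lambda>t. 1 - ln (2 * sqrt (\<kappa> * y t)) / y t - ln (e t) / y t) \<longlongrightarrow> 1) at_top"
    using tendsto_diff[OF tendsto_diff[OF tendsto_const[of 1] ln_r] ln_e] by simp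
  moreover have "eventually (\<lambda>t. 1 - ln (2 * sqrt (\<kappa> * y t)) / y t - ln (e t) / y t = ln t / y t) at_top"
    using ev
  proof eventually_elim
    case (elim t)
    then have "y t > 0" "2 * sqrt (\<kappa> * y t) > 0" using \<kappa>_pos by (auto simp: y_def)
    then have "\<tau> t = t * (2 * sqrt (\<kappa> * y t)) * e t"
      using elim \<kappa>_pos by (simp add: e_def)
    then have "y t = ln (t * (2 * sqrt (\<kappa> * y t)) * e t)"
      unfolding y_def by (rule arg_cong)
    also have "\<dots> = ln (t * (2 * sqrt (\<kappa> * y t))) + ln (e t)"
      using elim \<open>2 * sqrt (\<kappa> * y t) > 0\<close> by (intro ln_mult_pos mult_pos_pos) auto
    also have "ln (t * (2 * sqrt (\<kappa> * y t))) = ln t + ln (2 * sqrt (\<kappa> * y t))"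
      using elim \<open>2 * sqrt (\<kappa> * y t) > 0\<close> by (intro ln_mult_pos) auto
    finally have "ln t = y t - ln (2 * sqrt (\<kappa> * y t)) - ln (e t)"
      by simp
    then show ?case
      using \<open>y t > 0\<close> by (simp add: diff_divide_distrib)
  qed
  ultimately have "ln \<sim>[at_top] y"
    by (intro asymp_equivI') (rule Lim_transform_eventually)
  then show ?thesis by (simp add: asymp_equiv_sym y_def[abs_def])
qed

theorem asymptotics:
  "\<tau> \<sim>[at_top] (\<lambda>t. 2 * t * sqrt (\<kappa> * ln t))"
  "\<tau>' \<sim>[at_top] (\<lambda>t. 2 * sqrt (\<kappa> * ln t))"
proof -
  have "(\<lambda>t. sqrt (\<kappa> * ln (\<tau> t))) \<sim>[at_top] (\<lambda>t. sqrt (\<kappa> * ln t))"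
  proof (rule asymp_equiv_sqrt)
    show "(\<lambda>t. \<kappa> * ln (\<tau> t)) \<sim>[at_top] (\<lambda>t. \<kappa> * ln t)"
      by (intro asymp_equiv_mult asymp_equiv_refl ln_tau_equiv)
    show "eventually (\<lambda>t. 0 \<le> \<kappa> * ln (\<tau> t)) at_top"
      using eventually_tau_gt_1 by eventually_elim (use \<kappa>_pos in simp)
    show "eventually (\<lambda>t. 0 \<le> \<kappa> * ln t) at_top"
      using eventually_ge_at_top[of 1] by eventually_elim (use \<kappa>_pos in simp)
  qed
  then have sqrt_equiv: "(\<lambda>t. c t * sqrt (\<kappa> * ln (\<tau> t))) \<sim>[at_top] (\<lambda>t. c t * sqrt (\<kappa> * ln t))"
    for c :: "real \<Rightarrow> real"
    by (intro asymp_equiv_mult asymp_equiv_refl)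
  show "\<tau> \<sim>[at_top] (\<lambda>t. 2 * t * sqrt (\<kappa> * ln t))"
    using asymp_equiv_trans[OF tau_equiv sqrt_equiv[of "\<lambda>t. 2 * t"]] .
  show "\<tau>' \<sim>[at_top] (\<lambda>t. 2 * sqrt (\<kappa> * ln t))"
    using asymp_equiv_trans[OF velocity_equiv sqrt_equiv[of "\<lambda>_. 2"]] .
qed

end

theorem lemma3p2:
  fixes \<alpha> \<beta> \<kappa> \<epsilon> \<nu> :: real
  assumes "\<alpha> > 0" "\<kappa> > 0" "\<epsilon> \<ge> 0" "\<nu> \<ge> 0"
  shows "\<exists>\<tau> \<tau>'. is_ivp_solution \<alpha> \<beta> \<kappa> \<epsilon> \<nu> \<tau> \<tau>' \<and>
           (\<forall>\<sigma> \<sigma>'. is_ivp_solution \<alpha> \<beta> \<kappa> \<epsilon> \<nu> \<sigma> \<sigma>' \<longrightarrow>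
                (\<forall>t\<ge>0. \<sigma> t = \<tau> t \<and> \<sigma>' t = \<tau>' t)) \<and>
           \<tau> \<sim>[at_top] (\<lambda>t. 2 * t * sqrt (\<kappa> * ln t)) \<and>
           \<tau>' \<sim>[at_top] (\<lambda>t. 2 * sqrt (\<kappa> * ln t))"
proof -
  \<comment> \<open>\<open>\<epsilon>\<close> enters only through \<open>\<epsilon>\<^sup>2\<close>.\<close>
  have solution: "ivp_solution \<alpha> \<beta> \<kappa> \<epsilon> \<nu> \<sigma> \<sigma>'" if "is_ivp_solution \<alpha> \<beta> \<kappa> \<epsilon> \<nu> \<sigma> \<sigma>'" for \<sigma> \<sigma>'
    using that assms by unfold_locales
  obtain \<tau> \<tau>' where \<tau>: "is_ivp_solution \<alpha> \<beta> \<kappa> \<epsilon> \<nu> \<tau> \<tau>'"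
    using ivp_solution_exists assms by blast
  have uniq: "\<forall>\<sigma> \<sigma>'. is_ivp_solution \<alpha> \<beta> \<kappa> \<epsilon> \<nu> \<sigma> \<sigma>' \<longrightarrow> (\<forall>t\<ge>0. \<sigma> t = \<tau> t \<and> \<sigma>' t = \<tau>' t)"
  proof (intro allI impI)
    fix \<sigma> \<sigma>' :: "real \<Rightarrow> real" and t :: real
    assume "is_ivp_solution \<alpha> \<beta> \<kappa> \<epsilon> \<nu> \<sigma> \<sigma>'" "t \<ge> 0"
    then show "\<sigma> t = \<tau> t \<and> \<sigma>' t = \<tau>' t"
      using ivp_solution_unique solution \<tau> by blast
  qed
  show ?thesis
    by (rule exI[of _ \<tau>], rule exI[of _ \<tau>'])
       (intro conjI \<tau> uniq ivp_solution.asymptotics[OF solution[OF \<tau>]])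
qed

end
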